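(* Let $\alpha\in\mathcal{E}$, $R\in\mathbb{N}$, and natural numbers $x_0<\dots<x_R$ and $y_0<\dots<y_R$ with $\mathrm{MC}(\alpha)<y_0$ and $0<x_i\leq y_i$ for all $i\leq R$. If $\alpha[x_0][x_1]\cdots[x_R]>0$, then $\alpha[y_0][y_1]\cdots[y_R]>0$.
   Context: $\mathcal{E}$ is the set of ordinal notations below $\varepsilon_0$: formal sums $\omega^{\alpha_0}+\dots+\omega^{\alpha_n}$ with $\alpha_0\geq\dots\geq\alpha_n\in\mathcal{E}$ (the empty sum is $0$). The order is lexicographic: $\omega^{\alpha_0}+\dots+\omega^{\alpha_n}<\omega^{\beta_0}+\dots+\omega^{\beta_m}$ iff either $n<m$ and $\alpha_i=\beta_i$ for all $i\leq n$, or there is $i\leq\min\{n,m\}$ with $\alpha_j=\beta_j$ for $j<i$ and $\alpha_i<\beta_i$. Also $0<\alpha$ for $\alpha\neq0$. Write $1=\omega^0$. A nonzero ordinal is a successor if its last exponent $\alpha_n$ is $0$ and a limit otherwise. Every $\alpha$ has a Cantor normal form $\omega^{\alpha_0}a_0+\dots+\omega^{\alpha_n}a_n$ with $\alpha_0>\dots>\alpha_n$ and positive integers $a_i$. The maximal coefficient is $\mathrm{MC}(0)=0$ and $\mathrm{MC}(\alpha)=\max_i\{a_i,\mathrm{MC}(\alpha_i)\}$. Fundamental sequences, for $\alpha=\omega^{\alpha_0}+\dots+\omega^{\alpha_n}$ and $x\in\mathbb{N}$: $0[x]=0$. If $\alpha_n=0$ then $\alpha[x]=\omega^{\alpha_0}+\dots+\omega^{\alpha_{n-1}}$.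 If $\alpha_n=\beta+1$ then $\alpha[x]=\omega^{\alpha_0}+\dots+\omega^{\alpha_{n-1}}+\omega^\beta\cdot x$ ($x$ copies of $\omega^\beta$). If $\alpha_n$ is a limit then $\alpha[x]=\omega^{\alpha_0}+\dots+\omega^{\alpha_{n-1}}+\omega^{\alpha_n[x]}$. $\alpha[x_0][x_1]\cdots[x_R]$ denotes iterated application. *)

theory Defs
  imports Main
begin

text \<open>Ordinal notations below epsilon_0: Om [a0,...,an] denotes
  omega^a0 + ... + omega^an.  Om [] is 0.\<close>
datatype ON = Om "ON list"

definition zero :: ON where "zero = Om []"

fun on_less :: "ON \<Rightarrow> ON \<Rightarrow> bool"
and list_less :: "ON list \<Rightarrow> ON list \<Rightarrow> bool" where
  "on_less (Om as) (Om bs) = list_less as bs"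
| "list_less [] [] = False"
| "list_less [] (b # bs) = True"
| "list_less (a # as) [] = False"
| "list_less (a # as) (b # bs) = (on_less a b \<or> (a = b \<and> list_less as bs))"

fun in_E :: "ON \<Rightarrow> bool"
and in_E_list :: "ON list \<Rightarrow> bool" where
  "in_E (Om as) = (sorted_wrt (\<lambda>a b. on_less b a \<or> a = b) as \<and> in_E_list as)"
| "in_E_list [] = True"
| "in_E_list (a # as) = (in_E a \<and> in_E_list as)"

text \<open>Maximal coefficient: the Cantor normal form coefficient of omega^a in
  Om as is the number of copies of a in as.\<close>
fun MC :: "ON \<Rightarrow> nat" where
  "MC (Om as) = Max (insert 0 (set (map (\<lambda>a. max (count_list as a) (MC a)) as)))"

fun fs_list :: "ON list \<Rightarrow> nat \<Rightarrow> ON list" where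
  "fs_list [] x = []"
| "fs_list [Om []] x = []"
| "fs_list [Om (b # bs)] x =
     (if last (b # bs) = Om [] then replicate x (Om (butlast (b # bs)))
      else [Om (fs_list (b # bs) x)])"
| "fs_list (a # b # rest) x = a # fs_list (b # rest) x"

fun fs :: "ON \<Rightarrow> nat \<Rightarrow> ON" where
  "fs (Om as) x = Om (fs_list as x)"

definition fs_iter :: "ON \<Rightarrow> nat list \<Rightarrow> ON" where
  "fs_iter a xs = foldl fs a xs"

end

theory Submission
  imports Defs
begin

text \<open>The heart of the argument is a one-step comparison: if \<open>\<beta> \<in> E\<close>, \<open>\<beta> \<le> \<gamma>\<close>,
  \<open>x \<le> y\<close> and \<open>MC \<beta> < y\<close>, then \<open>\<beta>[x] \<le> \<gamma>[y]\<close>.  For \<open>\<beta> = \<gamma>\<close> this is monotonicity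
  of fundamental sequences in their argument; for \<open>\<beta> < \<gamma>\<close> it combines \<open>\<beta>[x] \<le> \<beta>\<close> with
  the Bachmann property \<open>\<beta> \<le> \<gamma>[y]\<close>, which holds because every Cantor normal form
  coefficient of \<open>\<beta>\<close> is below \<open>y\<close>.  Since \<open>\<beta>[x]\<close> stays in \<open>E\<close> and
  \<open>MC(\<beta>[x]) \<le> max(MC \<beta>, x) \<le> y\<^sub>i < y\<^sub>i\<^sub>+\<^sub>1\<close>, the comparison iterates along both
  sequences and gives \<open>\<alpha>[x\<^sub>0]\<dots>[x\<^sub>R] \<le> \<alpha>[y\<^sub>0]\<dots>[y\<^sub>R]\<close>.\<close>

definition on_le :: "ON \<Rightarrow> ON \<Rightarrow> bool" where
  "on_le a b \<longleftrightarrow> on_less a b \<or> a = b"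

abbreviation nonincreasing :: "ON list \<Rightarrow> bool" where
  "nonincreasing \<equiv> sorted_wrt (\<lambda>a b. on_less b a \<or> a = b)"

lemma list_less_Nil_right [simp]: "\<not> list_less as []"
  by (cases as) auto

lemma on_less_irrefl: "\<not> on_less a a"
proof (induction a)
  case (Om as)
  then show ?case by (induction as) auto
qed

lemma list_less_trans:
  assumes "\<And>a b c. a \<in> set as \<Longrightarrow> on_less a b \<Longrightarrow> on_less b c \<Longrightarrow> on_less a c"
    and "list_less as bs" and "list_less bs cs"
  shows "list_less as cs"
  using assms
proof (induction as arbitrary: bs cs)
  case Nil
  then show ?case by (cases bs; cases cs) auto
next
  case (Cons a as)
  obtain b bs' c cs' where bs: "bs = b # bs'" and cs: "cs = c # cs'"
    using Cons.prems(2,3) by (cases bs; cases cs) auto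
  have "list_less as bs' \<Longrightarrow> list_less bs' cs' \<Longrightarrow> list_less as cs'"
    using Cons.IH Cons.prems(1) by simp
  moreover have "on_less a b \<Longrightarrow> on_less b c \<Longrightarrow> on_less a c"
    using Cons.prems(1) by simp
  ultimately show ?case using Cons.prems(2,3) unfolding bs cs by auto
qed

lemma on_less_trans: "on_less a b \<Longrightarrow> on_less b c \<Longrightarrow> on_less a c"
proof (induction a arbitrary: b c)
  case (Om as)
  obtain bs cs where b: "b = Om bs" and c: "c = Om cs" by (cases b, cases c)
  have "list_less as cs"
    using Om b c by (intro list_less_trans[of as bs cs]) auto
  then show ?case using c by simp
qed

lemma on_le_trans: "on_le a b \<Longrightarrow> on_le b c \<Longrightarrow> on_le a c"
  unfolding on_le_def using on_less_trans by blast

lemma on_less_le_trans: "on_less a b \<Longrightarrow> on_le b c \<Longrightarrow> on_less a c"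
  unfolding on_le_def using on_less_trans by blast

lemma list_less_append_left_iff [simp]: "list_less (p @ s) (p @ t) \<longleftrightarrow> list_less s t"
  by (induction p) (auto simp: on_less_irrefl)

lemma list_less_self_append_iff: "list_less p (p @ t) \<longleftrightarrow> t \<noteq> []"
  using list_less_append_left_iff[of p "[]" t] by (cases t) auto

lemma list_less_append_rightI: "list_less s p \<Longrightarrow> list_less s (p @ t)"
proof (induction s arbitrary: p)
  case Nil
  then show ?case by (cases p) auto
next
  case (Cons b s)
  then show ?case by (cases p) auto
qed

lemma list_less_snocE:
  assumes "list_less s (p @ [g])"
  obtains "list_less s p" | "s = p" | c r where "s = p @ c # r" "on_less c g"
  using assms
proof (induction p arbitrary: s)
  case Nil
  then show ?case by (cases s) auto
next
  case (Cons a p)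
  then show ?case by (cases s) auto
qed

lemma list_less_singletonI: "\<forall>c\<in>set s. on_less c g \<Longrightarrow> list_less s [g]"
  by (cases s) auto

lemma on_le_Om_append_left_iff: "on_le (Om (p @ s)) (Om (p @ t)) \<longleftrightarrow> on_le (Om s) (Om t)"
  by (simp add: on_le_def)

fun is_limit :: "ON \<Rightarrow> bool" where
  "is_limit (Om gs) \<longleftrightarrow> gs \<noteq> [] \<and> last gs \<noteq> zero"

lemma fs_list_snoc: "fs_list (p @ [g]) n = p @ fs_list [g] n"
proof (induction p)
  case Nil
  show ?case by simp
next
  case (Cons a p)
  then show ?case by (cases p) auto
qed

lemma fs_list_single_cases:
  obtains (zero) "g = zero" "\<And>n. fs_list [g] n = []"
  | (succ) d where "g = Om (d @ [zero])" "\<And>n. fs_list [g] n = replicate n (Om d)"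
  | (limit) "is_limit g" "\<And>n. fs_list [g] n = [fs g n]"
proof (cases g)
  case (Om ds)
  show ?thesis
  proof (cases ds)
    case Nil
    then show ?thesis using zero Om by (simp add: zero_def)
  next
    case (Cons b bs)
    show ?thesis
    proof (cases "last ds = zero")
      case True
      then have "g = Om (butlast ds @ [zero])" using Om Cons by (metis append_butlast_last_id list.discI)
      then show ?thesis using succ True Om Cons by (simp add: zero_def)
    next
      case False
      then show ?thesis using limit Om Cons by (simp add: zero_def)
    qed
  qed
qed

lemma fs_list_single_on_less: "c \<in> set (fs_list [g] n) \<Longrightarrow> on_less c g"
proof (induction g arbitrary: c)
  case (Om gs)
  then show ?case
  proof (cases "Om gs" rule: fs_list_single_cases)
    case (succ d)
    then show ?thesis using Om.prems list_less_self_append_iff[of d] by simp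
  next
    case limit
    then obtain p g where gs: "gs = p @ [g]" by (cases gs rule: rev_cases) auto
    have "list_less (fs_list [g] n) [g]"
      using Om.IH gs by (auto intro: list_less_singletonI)
    then show ?thesis using Om.prems limit gs by (simp add: fs_list_snoc)
  qed simp
qed

lemma fs_on_less: "a \<noteq> zero \<Longrightarrow> on_less (fs a n) a"
proof -
  assume "a \<noteq> zero"
  obtain gs where "a = Om gs" by (cases a)
  with \<open>a \<noteq> zero\<close> obtain p g where a: "a = Om (p @ [g])"
    by (cases gs rule: rev_cases) (auto simp: zero_def)
  have "list_less (fs_list [g] n) [g]"
    using fs_list_single_on_less by (blast intro: list_less_singletonI)
  then show ?thesis by (simp add: a fs_list_snoc)
qed

lemma fs_on_le: "on_le (fs a n) a"
  using fs_on_less[of a n] by (cases "a = zero") (auto simp: on_le_def zero_def)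

lemma fs_mono: "x \<le> y \<Longrightarrow> on_le (fs a x) (fs a y)"
proof (induction a)
  case (Om gs)
  show ?case
  proof (cases gs rule: rev_cases)
    case Nil
    then show ?thesis by (simp add: on_le_def)
  next
    case (snoc p g)
    have "on_le (Om (fs_list [g] x)) (Om (fs_list [g] y))"
    proof (cases g rule: fs_list_single_cases)
      case zero
      then show ?thesis by (simp add: on_le_def zero_def)
    next
      case (succ d)
      have "replicate y (Om d) = replicate x (Om d) @ replicate (y - x) (Om d)"
        using Om.prems by (metis le_add_diff_inverse replicate_add)
      then show ?thesis using succ list_less_self_append_iff
        by (cases "x = y") (auto simp: on_le_def)
    next
      case limit
      moreover have "on_le (fs g x) (fs g y)" using Om snoc by simp
      ultimately show ?thesis by (auto simp: on_le_def on_less_irrefl)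
    qed
    then show ?thesis using snoc by (simp add: fs_list_snoc on_le_Om_append_left_iff)
  qed
qed

lemma in_E_list_iff [simp]: "in_E_list as \<longleftrightarrow> (\<forall>a\<in>set as. in_E a)"
  by (induction as) auto

lemma in_E_Om_appendD: "in_E (Om (p @ s)) \<Longrightarrow> in_E (Om p)"
  by (simp add: sorted_wrt_append)

lemma in_E_fs_list_single:
  assumes "in_E g" "in_E (fs g n)"
  shows "nonincreasing (fs_list [g] n) \<and> (\<forall>c\<in>set (fs_list [g] n). in_E c)"
proof (cases g rule: fs_list_single_cases)
  case (succ d)
  then have "in_E (Om d)" using assms(1) in_E_Om_appendD by blast
  then show ?thesis using succ by (simp add: sorted_wrt_iff_nth_less)
qed (use assms in auto)

lemma in_E_fs: "in_E a \<Longrightarrow> in_E (fs a n)"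
proof (induction a)
  case (Om gs)
  show ?case
  proof (cases gs rule: rev_cases)
    case (snoc p g)
    have p: "nonincreasing p" "\<forall>a\<in>set p. in_E a" and "in_E g"
      and g_le_p: "\<forall>a\<in>set p. on_less g a \<or> a = g"
      using Om.prems snoc by (auto simp: sorted_wrt_append)
    have "in_E (fs g n)" using Om.IH \<open>in_E g\<close> snoc by simp
    then have f: "nonincreasing (fs_list [g] n)" "\<forall>c\<in>set (fs_list [g] n). in_E c"
      using in_E_fs_list_single \<open>in_E g\<close> by blast+
    have "on_less c a \<or> a = c" if "a \<in> set p" "c \<in> set (fs_list [g] n)" for a c
      using g_le_p fs_list_single_on_less[OF that(2)] on_less_trans that(1) by blast
    then have "nonincreasing (p @ fs_list [g] n)"
      using p(1) f(1) unfolding sorted_wrt_append by blast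
    then show ?thesis using p(2) f(2) snoc by (auto simp: fs_list_snoc)
  qed simp
qed

lemma MC_le_iff: "MC (Om as) \<le> N \<longleftrightarrow> (\<forall>a\<in>set as. count_list as a \<le> N \<and> MC a \<le> N)"
  by auto

lemma MC_Om_appendD: "MC (Om (p @ s)) \<le> N \<Longrightarrow> MC (Om p) \<le> N"
  unfolding MC_le_iff by (metis Un_iff count_list_append le_add1 le_trans set_append)

lemma MC_fs: "in_E a \<Longrightarrow> MC a \<le> N \<Longrightarrow> n \<le> N \<Longrightarrow> MC (fs a n) \<le> N"
proof (induction a)
  case (Om gs)
  show ?case
  proof (cases gs rule: rev_cases)
    case (snoc p g)
    have M: "\<forall>c\<in>set (p @ [g]). count_list (p @ [g]) c \<le> N \<and> MC c \<le> N"
      using Om.prems(2) snoc MC_le_iff by metis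
    have g_le_p: "\<forall>a\<in>set p. on_less g a \<or> a = g"
      using Om.prems(1) snoc by (simp add: sorted_wrt_append)
    have disjoint: "c \<notin> set p" if "c \<in> set (fs_list [g] n)" for c
    proof
      assume "c \<in> set p"
      then have "on_less g c \<or> c = g" using g_le_p by blast
      then show False using fs_list_single_on_less[OF that] on_less_trans on_less_irrefl by blast
    qed
    have "\<forall>c\<in>set (fs_list [g] n). count_list (fs_list [g] n) c \<le> N \<and> MC c \<le> N"
    proof (cases g rule: fs_list_single_cases)
      case (succ d)
      have "MC (Om (d @ [zero])) \<le> N" using M succ(1) by simp
      then have "MC (Om d) \<le> N" by (rule MC_Om_appendD)
      then show ?thesis using succ Om.prems(3) by (simp add: count_list_eq_length_filter)
    next
      case limit
      have "count_list (p @ [g]) g \<le> N" using M by simp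
      then have "1 \<le> N" by simp
      moreover have "MC (fs g n) \<le> N"
      proof (rule Om.IH)
        show "g \<in> set gs" "in_E g" "MC g \<le> N" "n \<le> N"
          using Om.prems(1,3) M snoc by simp_all
      qed
      ultimately show ?thesis using limit by simp
    qed simp
    then have "MC (Om (p @ fs_list [g] n)) \<le> N"
      using M disjoint unfolding MC_le_iff by (force simp: count_list_append)
    then show ?thesis using snoc by (simp add: fs_list_snoc)
  qed simp
qed

lemma list_less_replicate:
  "nonincreasing (d # r) \<Longrightarrow> count_list (d # r) d < n \<Longrightarrow> list_less (d # r) (replicate n d)"
proof (induction r arbitrary: n)
  case Nil
  then obtain m where "n = Suc (Suc m)" by (cases n; cases "n - 1") auto
  then show ?case by (simp add: on_less_irrefl)
next
  case (Cons c r)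
  then obtain m where n: "n = Suc (Suc m)" by (cases n; cases "n - 1") auto
  show ?case
  proof (cases "c = d")
    case True
    have "list_less (d # r) (replicate (Suc m) d)"
      using Cons.prems True n by (intro Cons.IH) auto
    then show ?thesis using True n by (simp add: on_less_irrefl)
  next
    case False
    then show ?thesis using Cons.prems(1) n by (simp add: on_less_irrefl)
  qed
qed

lemma on_less_succD: "on_less c (Om (d @ [zero])) \<Longrightarrow> on_le c (Om d)"
proof (cases c)
  case (Om cs)
  assume "on_less c (Om (d @ [zero]))"
  then have "list_less cs (d @ [zero])" using Om by simp
  then show ?thesis
  proof (cases rule: list_less_snocE)
    case (3 e r)
    then show ?thesis by (cases e) (simp add: zero_def)
  qed (simp_all add: Om on_le_def)
qed

lemma on_less_imp_on_le_fs:
  "in_E b \<Longrightarrow> MC b < n \<Longrightarrow> on_less b \<gamma> \<Longrightarrow> on_le b (fs \<gamma> n) \<and> (is_limit \<gamma> \<longrightarrow> on_less b (fs \<gamma> n))"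
proof (induction \<gamma> arbitrary: b)
  case (Om gs)
  obtain bs where b: "b = Om bs" by (cases b)
  have "list_less bs gs" using Om.prems(3) b by simp
  then obtain p g where gs: "gs = p @ [g]" by (cases gs rule: rev_cases) auto
  have "0 < n" using Om.prems(2) by simp
  have bs: "nonincreasing bs" "\<forall>c\<in>set bs. in_E c"
    "\<forall>c\<in>set bs. count_list bs c < n \<and> MC c < n"
    using Om.prems(1,2) b MC_le_iff[of bs "n - 1"] by auto
  have "list_less bs (p @ fs_list [g] n) \<or> (bs = p \<and> fs_list [g] n = [])"
    using \<open>list_less bs gs\<close> unfolding gs
  proof (cases rule: list_less_snocE)
    case 1
    then show ?thesis by (simp add: list_less_append_rightI)
  next
    case 2
    then show ?thesis by (simp add: list_less_self_append_iff)
  next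
    case (3 c r)
    have c: "c \<in> set bs" using 3 by simp
    have "list_less (c # r) (fs_list [g] n)"
    proof (cases g rule: fs_list_single_cases)
      case zero
      then show ?thesis using 3 by (cases c) (simp add: zero_def)
    next
      case (succ d)
      from 3 succ have "on_le c (Om d)" by (simp add: on_less_succD)
      then consider "on_less c (Om d)" | "c = Om d" unfolding on_le_def by blast
      then show ?thesis
      proof cases
        case 1
        then show ?thesis using succ \<open>0 < n\<close> by (cases n) auto
      next
        case 2
        have "nonincreasing (c # r)" using bs(1) 3 by (simp add: sorted_wrt_append)
        moreover have "count_list (c # r) c < n" using bs(3) 3 c by fastforce
        ultimately have "list_less (c # r) (replicate n c)" by (rule list_less_replicate)
        then show ?thesis using 2 succ by simp
      qed
    next
      case limit
      then have "on_less c (fs g n)"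
        using Om.IH[of g c] 3 bs c gs by simp
      then show ?thesis using limit by simp
    qed
    then show ?thesis using 3 by simp
  qed
  moreover have "is_limit (Om gs) \<Longrightarrow> fs_list [g] n \<noteq> []"
    using \<open>0 < n\<close> gs by (cases g rule: fs_list_single_cases) (auto simp: zero_def)
  ultimately show ?case using b gs by (auto simp: on_le_def fs_list_snoc)
qed

lemma fs_on_le_fs:
  assumes "in_E b" "MC b < y" "x \<le> y" "on_le b \<gamma>"
  shows "on_le (fs b x) (fs \<gamma> y)"
proof (cases "b = \<gamma>")
  case True
  then show ?thesis using fs_mono assms(3) by simp
next
  case False
  then have "on_le b (fs \<gamma> y)"
    using on_less_imp_on_le_fs assms by (simp add: on_le_def)
  then show ?thesis using fs_on_le on_le_trans by blast
qed

lemma fs_iter_on_le_fs_iter: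
  assumes "list_all2 (\<le>) xs ys" "sorted_wrt (<) ys"
    and "in_E b" "\<forall>y\<in>set ys. MC b < y" "on_le b \<gamma>"
  shows "on_le (fs_iter b xs) (fs_iter \<gamma> ys)"
  using assms
proof (induction xs ys arbitrary: b \<gamma> rule: list_all2_induct)
  case Nil
  then show ?case by (simp add: fs_iter_def)
next
  case (Cons x xs y ys)
  have "in_E (fs b x)" using Cons.prems(2) by (rule in_E_fs)
  moreover have "MC (fs b x) \<le> y"
    using Cons.prems(2,3) Cons.hyps(1) by (intro MC_fs) auto
  then have "\<forall>z\<in>set ys. MC (fs b x) < z" using Cons.prems(1) by auto
  moreover have "on_le (fs b x) (fs \<gamma> y)"
    using Cons.prems(2-4) Cons.hyps(1) by (intro fs_on_le_fs) auto
  ultimately have "on_le (fs_iter (fs b x) xs) (fs_iter (fs \<gamma> y) ys)"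
    using Cons.IH Cons.prems(1) by simp
  then show ?case by (simp add: fs_iter_def)
qed

lemma sorted_wrt_less_map_upt:
  fixes f :: "nat \<Rightarrow> 'a::order"
  assumes "\<forall>i<n. f i < f (Suc i)"
  shows "sorted_wrt (<) (map f [0..<Suc n])"
  using assms
proof (induction n)
  case (Suc n)
  then have sorted: "sorted_wrt (<) (map f [0..<Suc n])" by simp
  have "f i < f (Suc n)" if "i \<le> n" for i
  proof -
    have "f i \<le> f n" using sorted that by (cases "i = n") (auto simp: sorted_wrt_append less_imp_le)
    also have "f n < f (Suc n)" using Suc.prems by simp
    finally show ?thesis .
  qed
  then show ?case using sorted by (auto simp: sorted_wrt_append)
qed simp

theorem lemma2p6:
  fixes \<alpha> :: ON and R :: nat and x y :: "nat \<Rightarrow> nat"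
  assumes "in_E \<alpha>"
    and "\<forall>i<R. x i < x (Suc i)"
    and "\<forall>i<R. y i < y (Suc i)"
    and "MC \<alpha> < y 0"
    and "\<forall>i\<le>R. 0 < x i \<and> x i \<le> y i"
    and "on_less zero (fs_iter \<alpha> (map x [0..<Suc R]))"
  shows "on_less zero (fs_iter \<alpha> (map y [0..<Suc R]))"
proof -
  have sorted: "sorted_wrt (<) (map y [0..<Suc R])"
    using assms(3) by (rule sorted_wrt_less_map_upt)
  then have "\<forall>z\<in>set (map y [0..<Suc R]). MC \<alpha> < z"
    using assms(4) by (auto simp del: upt_Suc simp: upt_conv_Cons)
  moreover have "list_all2 (\<le>) (map x [0..<Suc R]) (map y [0..<Suc R])"
    using assms(5) by (auto simp: list_all2_conv_all_nth less_Suc_eq_le simp del: upt_Suc)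
  ultimately have "on_le (fs_iter \<alpha> (map x [0..<Suc R])) (fs_iter \<alpha> (map y [0..<Suc R]))"
    using sorted assms(1) by (intro fs_iter_on_le_fs_iter) (auto simp: on_le_def)
  then show ?thesis using assms(6) on_less_le_trans by blast
qed

end
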